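(* Let $F_\infty$ be the free group on countably many generators $a_1,a_2,\dots$, and let $T$ be its Cayley graph with respect to $\{a_i\}$ (vertices: reduced words; $t$ adjacent to $ta_i^{\pm1}$), a tree rooted at the empty word $\emptyset$. For $t\ne\emptyset$ let $\hat t$ be the word obtained by deleting the last letter of $t$. Let $G=\mathrm{Aut}(T)$ be the group of graph automorphisms of $T$, acting on $\mathbb C^T$ (and on $\ell_1(T),\ell_2(T)$) by $u(g)x=(x(g^{-1}t))_{t\in T}$. Define $R:\ell_2(T)\to\ell_\infty(T)$ by $(Rx)(s)=x(\hat s)$ for $s\neq\emptyset$, $(Rx)(\emptyset)=0$, and $L:\ell_1(T)\to\ell_1(T)$ by $Le_t=e_{\hat t}$ for $t\ne\emptyset$, $Le_\emptyset=0$. Then: (1) there is no linear map $\Lambda:\ell_2(T)\to\mathbb C^T$ with $u(g)\Lambda=\Lambda u(g)$ for all $g\in G$ such that $R-\Lambda$ maps $\ell_2(T)$ boundedly into $\ell_2(T)$; (2) there is no linear map $\Lambda:\ell_1(T)\to\mathbb C^T$ with $u(g)\Lambda=\Lambda u(g)$ for all $g\in G$ such that $(L-\Lambda)x\in\ell_2(T)$ and $\|(L-\Lambda)x\|_2\le C\|x\|_2$ for all $x\in\ell_1(T)$.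
   Context: $e_t$ denotes the canonical basis vector at $t\in T$. (It is known that the commutators $u(g)R-Ru(g)$ and $u(g)L-Lu(g)$ extend to bounded operators on $\ell_2(T)$ of norm at most $2$, so $R$ and $L$ are linear $\mathrm{Aut}(T)$-centralizers $\ell_2(T)\curvearrowright\ell_2(T)$.) *)

theory Defs
  imports "HOL-Analysis.Analysis"
begin

text \<open>Letters: (i, True) = a_i, (i, False) = a_i^{-1}. Words are lists of letters.\<close>
type_synonym word = "(nat \<times> bool) list"

definition reduced :: "word \<Rightarrow> bool" where
  "reduced w \<longleftrightarrow> (\<forall>k. Suc k < length w \<longrightarrow>
      \<not> (fst (w ! k) = fst (w ! Suc k) \<and> snd (w ! k) \<noteq> snd (w ! Suc k)))"

definition TT :: "word set" where
  "TT = {w. reduced w}"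

text \<open>Adjacency in the Cayley graph: t ~ t a_i^{+-1} (on reduced words this means one
  word is the other extended by one letter).\<close>
definition adj :: "word \<Rightarrow> word \<Rightarrow> bool" where
  "adj s t \<longleftrightarrow> (\<exists>l. t = s @ [l]) \<or> (\<exists>l. s = t @ [l])"

text \<open>Graph automorphisms of T (only the values on TT matter).\<close>
definition tree_aut :: "(word \<Rightarrow> word) \<Rightarrow> bool" where
  "tree_aut g \<longleftrightarrow> bij_betw g TT TT \<and> (\<forall>s\<in>TT. \<forall>t\<in>TT. adj s t \<longleftrightarrow> adj (g s) (g t))"

text \<open>Elements of C^T are represented by functions vanishing outside TT.\<close>
definition vecT :: "(word \<Rightarrow> complex) \<Rightarrow> bool" where
  "vecT x \<longleftrightarrow> (\<forall>t. t \<notin> TT \<longrightarrow> x t = 0)"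

definition ell1 :: "(word \<Rightarrow> complex) set" where
  "ell1 = {x. vecT x \<and> (\<lambda>t. norm (x t)) summable_on TT}"

definition ell2 :: "(word \<Rightarrow> complex) set" where
  "ell2 = {x. vecT x \<and> (\<lambda>t. (norm (x t))\<^sup>2) summable_on TT}"

definition norm2 :: "(word \<Rightarrow> complex) \<Rightarrow> real" where
  "norm2 x = sqrt (\<Sum>\<^sub>\<infinity>t\<in>TT. (norm (x t))\<^sup>2)"

definition uact :: "(word \<Rightarrow> word) \<Rightarrow> (word \<Rightarrow> complex) \<Rightarrow> (word \<Rightarrow> complex)" where
  "uact g x = (\<lambda>t. if t \<in> TT then x (inv_into TT g t) else 0)"

definition Rop :: "(word \<Rightarrow> complex) \<Rightarrow> (word \<Rightarrow> complex)" where
  "Rop x = (\<lambda>s. if s \<in> TT \<and> s \<noteq> [] then x (butlast s) else 0)"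

text \<open>L e_t = e_{hat t}, extended to ell1: (Lx)(s) = sum of x(t) over t with hat t = s.\<close>
definition Lop :: "(word \<Rightarrow> complex) \<Rightarrow> (word \<Rightarrow> complex)" where
  "Lop x = (\<lambda>s. if s \<in> TT then (\<Sum>\<^sub>\<infinity>t\<in>{t\<in>TT. t \<noteq> [] \<and> butlast t = s}. x t) else 0)"

definition lin_on :: "(word \<Rightarrow> complex) set \<Rightarrow> ((word \<Rightarrow> complex) \<Rightarrow> (word \<Rightarrow> complex)) \<Rightarrow> bool" where
  "lin_on D \<Lambda> \<longleftrightarrow> (\<forall>x\<in>D. \<forall>y\<in>D. \<forall>c a::complex. \<forall>t\<in>TT.
      \<Lambda> (\<lambda>s. c * x s + a * y s) t = c * \<Lambda> x t + a * \<Lambda> y t)"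

definition equivariant_on :: "(word \<Rightarrow> complex) set \<Rightarrow> ((word \<Rightarrow> complex) \<Rightarrow> (word \<Rightarrow> complex)) \<Rightarrow> bool" where
  "equivariant_on D \<Lambda> \<longleftrightarrow> (\<forall>g. tree_aut g \<longrightarrow> (\<forall>x\<in>D. \<forall>t\<in>TT.
      uact g (\<Lambda> x) t = \<Lambda> (uact g x) t))"

definition restrT :: "(word \<Rightarrow> complex) \<Rightarrow> (word \<Rightarrow> complex)" where
  "restrT y = (\<lambda>t. if t \<in> TT then y t else 0)"

end

theory Submission
  imports Defs
begin

text \<open>
  Let \<Lambda> be linear and Aut(T)-equivariant, and put \<kappa> = (\<Lambda> e_\<emptyset>)(a) for a letter a;
  by relabelling generators this does not depend on a, and by translating with left
  multiplications (\<Lambda> e_a)(\<emptyset>) = \<kappa> and (\<Lambda> e_a)(ab) = \<kappa> for all letters a, b with b \<noteq> a^-1.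
  A square-summable difference cannot be constant on infinitely many vertices, so comparing
  with R e_a on the children of a forces \<kappa> = 1, and comparing with L e_\<emptyset> = 0 on the letters
  forces \<kappa> = 0. Then for x = e_a1 + \<dots> + e_an the difference has modulus n at the root,
  whereas \<parallel>x\<parallel>_2 = \<surd>n.
\<close>

definition letter_inv :: "nat \<times> bool \<Rightarrow> nat \<times> bool" where
  "letter_inv x = (fst x, \<not> snd x)"

lemma letter_inv_letter_inv [simp]: "letter_inv (letter_inv x) = x"
  by (simp add: letter_inv_def)

lemma reduced_iff_no_cancellation:
  "reduced w \<longleftrightarrow> (\<forall>k. Suc k < length w \<longrightarrow> w ! Suc k \<noteq> letter_inv (w ! k))"
proof -
  have "(fst a = fst b \<and> snd a \<noteq> snd b) \<longleftrightarrow> b = letter_inv a" for a b :: "nat \<times> bool"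
    by (cases a; cases b) (auto simp: letter_inv_def)
  then show ?thesis unfolding reduced_def by simp
qed

lemma reduced_Cons_Cons: "reduced (x # y # w) \<longleftrightarrow> y \<noteq> letter_inv x \<and> reduced (y # w)"
  unfolding reduced_iff_no_cancellation
  by (auto simp: less_Suc_eq_0_disj All_less_Suc2 simp del: nth_Cons_Suc)

lemma reduced_Nil [simp]: "reduced []" and reduced_singleton [simp]: "reduced [x]"
  by (simp_all add: reduced_def)

lemma reduced_Cons_tail: "reduced (x # w) \<Longrightarrow> reduced w"
  by (cases w) (auto simp: reduced_Cons_Cons)

lemma Nil_in_TT [simp]: "[] \<in> TT" and letter_in_TT [simp]: "[x] \<in> TT"
  by (simp_all add: TT_def)

lemma tree_aut_byWitness:
  assumes "g ` TT \<subseteq> TT" "h ` TT \<subseteq> TT"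
    and "\<And>t. t \<in> TT \<Longrightarrow> h (g t) = t" "\<And>t. t \<in> TT \<Longrightarrow> g (h t) = t"
    and "\<And>s t. adj s t \<Longrightarrow> adj (g s) (g t)" "\<And>s t. adj s t \<Longrightarrow> adj (h s) (h t)"
  shows "tree_aut g" and "t \<in> TT \<Longrightarrow> inv_into TT g t = h t"
proof -
  have bij: "bij_betw g TT TT"
    by (rule bij_betw_byWitness[of _ h]) (use assms in auto)
  then show "tree_aut g"
    unfolding tree_aut_def using assms(3,5,6) bij_betwE by metis
  show "t \<in> TT \<Longrightarrow> inv_into TT g t = h t"
    using assms bij by (metis bij_betw_def image_subset_iff inv_into_f_f)
qed

fun lmul :: "nat \<times> bool \<Rightarrow> word \<Rightarrow> word" where
  "lmul x [] = [x]"
| "lmul x (y # t) = (if y = letter_inv x then t else x # y # t)"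

lemma lmul_in_TT: "t \<in> TT \<Longrightarrow> lmul x t \<in> TT"
  unfolding TT_def by (cases t) (auto simp: reduced_Cons_Cons dest: reduced_Cons_tail)

lemma lmul_letter_inv_lmul: "t \<in> TT \<Longrightarrow> lmul (letter_inv x) (lmul x t) = t"
  unfolding TT_def
  by (cases t rule: remdups_adj.cases) (auto simp: reduced_Cons_Cons)

lemma adj_lmul: "adj s t \<Longrightarrow> adj (lmul x s) (lmul x t)"
proof -
  have "lmul x (s @ [z]) = lmul x s @ [z] \<or> lmul x s = lmul x (s @ [z]) @ [x]" for s z
    by (cases s) auto
  then show "adj s t \<Longrightarrow> adj (lmul x s) (lmul x t)" unfolding adj_def by metis
qed

lemma tree_aut_lmul: "tree_aut (lmul x)"
  and inv_into_lmul: "t \<in> TT \<Longrightarrow> inv_into TT (lmul x) t = lmul (letter_inv x) t"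
  by (rule tree_aut_byWitness[of "lmul x" "lmul (letter_inv x)"],
      auto simp: lmul_in_TT lmul_letter_inv_lmul adj_lmul
        dest: lmul_letter_inv_lmul[of _ "letter_inv x"])+

text \<open>The relabelling of the generators that exchanges the letter a with b and a^-1 with b^-1.\<close>
definition swap_letters :: "nat \<times> bool \<Rightarrow> nat \<times> bool \<Rightarrow> nat \<times> bool \<Rightarrow> nat \<times> bool" where
  "swap_letters a b z =
     (if fst z = fst a then (fst b, (snd z = snd a) = snd b)
      else if fst z = fst b then (fst a, (snd z = snd b) = snd a) else z)"

lemma swap_letters_swap_letters [simp]: "swap_letters a b (swap_letters a b z) = z"
  unfolding swap_letters_def by (cases z; cases a; cases b) auto

lemma swap_letters_letter_inv: "swap_letters a b (letter_inv z) = letter_inv (swap_letters a b z)"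
  unfolding swap_letters_def letter_inv_def by (cases z; cases a; cases b) auto

lemma swap_letters_right: "swap_letters a b b = a"
  unfolding swap_letters_def by (cases a; cases b) auto

lemma map_swap_letters_in_TT: "t \<in> TT \<Longrightarrow> map (swap_letters a b) t \<in> TT"
  unfolding TT_def reduced_iff_no_cancellation
  by (auto simp: swap_letters_letter_inv[symmetric] dest: arg_cong[where f = "swap_letters a b"])

lemma tree_aut_swap_letters: "tree_aut (map (swap_letters a b))"
  and inv_into_swap_letters: "t \<in> TT \<Longrightarrow> inv_into TT (map (swap_letters a b)) t = map (swap_letters a b) t"
  by (rule tree_aut_byWitness[of "map (swap_letters a b)" "map (swap_letters a b)"],
      auto simp: map_swap_letters_in_TT adj_def comp_def)+

lemma uact_lmul_indicator_Nil: "uact (lmul l) (indicator {[]}) = indicator {[l]}"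
proof
  fix s
  have "lmul (letter_inv l) s = [] \<longleftrightarrow> s = [l]" if "s \<in> TT"
    using lmul_letter_inv_lmul[OF that, of "letter_inv l"] by auto
  then show "uact (lmul l) (indicator {[]}) s = indicator {[l]} s"
    by (auto simp: uact_def inv_into_lmul indicator_def)
qed

lemma equivariant_indicator_letter:
  assumes "equivariant_on D \<Lambda>" "indicator {[]} \<in> D" "t \<in> TT"
  shows "\<Lambda> (indicator {[l]}) t = \<Lambda> (indicator {[]}) (lmul (letter_inv l) t)"
proof -
  have "uact (lmul l) (\<Lambda> (indicator {[]})) t = \<Lambda> (uact (lmul l) (indicator {[]})) t"
    using assms tree_aut_lmul unfolding equivariant_on_def by blast
  then show ?thesis
    using assms(3) unfolding uact_lmul_indicator_Nil by (simp add: uact_def inv_into_lmul)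
qed

lemma equivariant_Nil_indicator_letters:
  assumes "equivariant_on D \<Lambda>" "indicator {[]} \<in> D"
  shows "\<Lambda> (indicator {[]}) [a] = \<Lambda> (indicator {[]}) [b]"
proof -
  let ?g = "map (swap_letters a b)"
  have fix_Nil: "uact ?g (indicator {[]}) = indicator {[]}"
    by (auto simp: uact_def inv_into_swap_letters indicator_def fun_eq_iff)
  have "uact ?g (\<Lambda> (indicator {[]})) [b] = \<Lambda> (uact ?g (indicator {[]})) [b]"
    using assms tree_aut_swap_letters unfolding equivariant_on_def by simp
  then show ?thesis
    unfolding fix_Nil by (simp add: uact_def inv_into_swap_letters swap_letters_right)
qed

lemma lin_on_indicator_sum:
  assumes lin: "lin_on D \<Lambda>" and indicator_in_D: "\<And>A. finite A \<Longrightarrow> A \<subseteq> TT \<Longrightarrow> indicator A \<in> D"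
    and "finite A" "A \<subseteq> TT" "t \<in> TT"
  shows "\<Lambda> (indicator A) t = (\<Sum>a\<in>A. \<Lambda> (indicator {a}) t)"
  using \<open>finite A\<close> \<open>A \<subseteq> TT\<close>
proof (induction A rule: finite_subset_induct')
  case empty
  have "\<Lambda> (\<lambda>s. 0 * indicator {} s + 0 * indicator {} s) t = 0 * \<Lambda> (indicator {}) t + 0 * \<Lambda> (indicator {}) t"
    using lin indicator_in_D[of "{}"] \<open>t \<in> TT\<close> unfolding lin_on_def by blast
  then show ?case by simp
next
  case (insert a F)
  have split: "(indicator (insert a F) :: word \<Rightarrow> complex) = (\<lambda>s. 1 * indicator F s + 1 * indicator {a} s)"
    using insert.hyps by (auto simp: indicator_def fun_eq_iff)
  have "\<Lambda> (\<lambda>s. 1 * indicator F s + 1 * indicator {a} s) t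
      = 1 * \<Lambda> (indicator F) t + 1 * \<Lambda> (indicator {a}) t"
    using lin indicator_in_D[of F] indicator_in_D[of "{a}"] insert.hyps \<open>t \<in> TT\<close>
    unfolding lin_on_def by blast
  then show ?case using insert by (simp add: split)
qed

definition first_letters :: "nat \<Rightarrow> word set" where
  "first_letters n = (\<lambda>i. [(i, True)]) ` {..<n}"

lemma finite_first_letters: "finite (first_letters n)"
  and first_letters_subset_TT: "first_letters n \<subseteq> TT"
  and card_first_letters: "card (first_letters n) = n"
  by (auto simp: first_letters_def card_image inj_on_def)

lemma equivariant_first_letters_at_Nil:
  assumes "lin_on D \<Lambda>" "equivariant_on D \<Lambda>"
    and indicator_in_D: "\<And>A. finite A \<Longrightarrow> A \<subseteq> TT \<Longrightarrow> indicator A \<in> D"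
  shows "\<Lambda> (indicator (first_letters n)) [] = of_nat n * \<Lambda> (indicator {[]}) [(0, True)]"
proof -
  have "\<Lambda> (indicator {w}) [] = \<Lambda> (indicator {[]}) [(0, True)]" if "w \<in> first_letters n" for w
    using that assms(2) indicator_in_D[of "{[]}"]
    by (auto simp: first_letters_def equivariant_indicator_letter
        intro: equivariant_Nil_indicator_letters)
  then show ?thesis
    using lin_on_indicator_sum[OF assms(1) indicator_in_D finite_first_letters first_letters_subset_TT]
    by (simp add: card_first_letters)
qed

lemma indicator_in_ell1: "finite A \<Longrightarrow> A \<subseteq> TT \<Longrightarrow> indicator A \<in> ell1"
  and indicator_in_ell2: "finite A \<Longrightarrow> A \<subseteq> TT \<Longrightarrow> indicator A \<in> ell2"
proof -
  assume A: "finite A" "A \<subseteq> TT"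
  then have vec: "vecT (indicator A)" by (auto simp: vecT_def indicator_def)
  have "f summable_on TT" if "\<And>t. t \<notin> A \<Longrightarrow> f t = 0" for f :: "word \<Rightarrow> real"
    using summable_on_cong_neutral[of A TT f f] A that by auto
  then show "indicator A \<in> ell1" "indicator A \<in> ell2"
    using vec by (auto simp: ell1_def ell2_def)
qed

lemma norm2_indicator: "finite A \<Longrightarrow> A \<subseteq> TT \<Longrightarrow> norm2 (indicator A) = sqrt (card A)"
proof -
  assume A: "finite A" "A \<subseteq> TT"
  have "(\<Sum>\<^sub>\<infinity>t\<in>TT. (norm (indicator A t :: complex))\<^sup>2) = (\<Sum>\<^sub>\<infinity>t\<in>A. 1)"
    by (rule infsum_cong_neutral) (use A in auto)
  then show ?thesis using A by (simp add: norm2_def)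
qed

lemma norm2_nonneg: "norm2 x \<ge> 0"
  by (simp add: norm2_def infsum_nonneg)

lemma sum_norm_sq_le_norm2_sq:
  assumes "y \<in> ell2" "finite F" "F \<subseteq> TT"
  shows "(\<Sum>t\<in>F. (norm (y t))\<^sup>2) \<le> (norm2 y)\<^sup>2"
proof -
  have "(\<lambda>t. (norm (y t))\<^sup>2) summable_on TT" using assms(1) by (simp add: ell2_def)
  then have "(\<Sum>\<^sub>\<infinity>t\<in>F. (norm (y t))\<^sup>2) \<le> (\<Sum>\<^sub>\<infinity>t\<in>TT. (norm (y t))\<^sup>2)"
    by (intro infsum_mono_neutral) (use assms in auto)
  then show ?thesis using assms by (simp add: norm2_def infsum_nonneg)
qed

lemma norm_le_norm2:
  assumes "y \<in> ell2" "t \<in> TT"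
  shows "norm (y t) \<le> norm2 y"
proof (rule power2_le_imp_le)
  show "(norm (y t))\<^sup>2 \<le> (norm2 y)\<^sup>2" using sum_norm_sq_le_norm2_sq[of y "{t}"] assms by simp
qed (rule norm2_nonneg)

lemma ell2_constant_on_infinite:
  assumes "y \<in> ell2" "infinite A" "A \<subseteq> TT" "\<And>t. t \<in> A \<Longrightarrow> y t = c"
  shows "c = 0"
proof (rule ccontr)
  assume "c \<noteq> 0"
  then have c: "(norm c)\<^sup>2 > 0" by simp
  obtain N :: nat where N: "(norm2 y)\<^sup>2 / (norm c)\<^sup>2 < N" using reals_Archimedean2 by blast
  obtain B where B: "finite B" "card B = N" "B \<subseteq> A"
    using infinite_arbitrarily_large[OF assms(2)] by blast
  have "N * (norm c)\<^sup>2 = (\<Sum>t\<in>B. (norm (y t))\<^sup>2)" using B assms(4) by (simp add: subset_iff)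
  also have "\<dots> \<le> (norm2 y)\<^sup>2" using B assms by (intro sum_norm_sq_le_norm2_sq) auto
  finally show False using N c by (simp add: field_simps)
qed

lemma not_linear_le_sqrt: "\<not> (\<forall>n::nat. real n \<le> C * sqrt n)"
proof
  assume le: "\<forall>n::nat. real n \<le> C * sqrt n"
  define n :: nat where "n = nat \<lceil>C\<^sup>2\<rceil> + 1"
  have "real n > C\<^sup>2" "real n > 0" unfolding n_def by linarith+
  moreover have "sqrt n * sqrt n \<le> C * sqrt n" using le by simp
  ultimately have "sqrt n \<le> C" by (metis mult_right_le_imp_le of_nat_0_less_iff real_sqrt_gt_zero)
  then have "real n \<le> C\<^sup>2" using real_sqrt_le_iff by fastforce
  with \<open>real n > C\<^sup>2\<close> show False by simp
qed

definition bounded_difference_on ::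
    "(word \<Rightarrow> complex) set \<Rightarrow> ((word \<Rightarrow> complex) \<Rightarrow> word \<Rightarrow> complex)
       \<Rightarrow> ((word \<Rightarrow> complex) \<Rightarrow> word \<Rightarrow> complex) \<Rightarrow> real \<Rightarrow> bool" where
  "bounded_difference_on D T \<Lambda> C \<longleftrightarrow> (\<forall>x\<in>D. restrT (\<lambda>t. T x t - \<Lambda> x t) \<in> ell2 \<and>
      norm2 (restrT (\<lambda>t. T x t - \<Lambda> x t)) \<le> C * norm2 x)"

lemma bounded_difference_constant_on_infinite:
  assumes "bounded_difference_on D T \<Lambda> C" "x \<in> D" "infinite A" "A \<subseteq> TT"
    and "\<And>t. t \<in> A \<Longrightarrow> T x t - \<Lambda> x t = c"
  shows "c = 0"
  using assms by (intro ell2_constant_on_infinite[of "restrT (\<lambda>t. T x t - \<Lambda> x t)" A])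
    (auto simp: bounded_difference_on_def restrT_def)

lemma bounded_difference_at_Nil_not_linear:
  assumes "bounded_difference_on D T \<Lambda> C" "\<And>n. indicator (first_letters n) \<in> D"
  shows "\<not> (\<forall>n. norm (T (indicator (first_letters n)) [] - \<Lambda> (indicator (first_letters n)) []) = n)"
proof
  assume defect: "\<forall>n. norm (T (indicator (first_letters n)) [] - \<Lambda> (indicator (first_letters n)) []) = n"
  have "real n \<le> C * sqrt n" for n
  proof -
    let ?x = "indicator (first_letters n)" and ?y = "restrT (\<lambda>t. T (indicator (first_letters n)) t
                                                          - \<Lambda> (indicator (first_letters n)) t)"
    have "?y \<in> ell2" "norm2 ?y \<le> C * norm2 ?x"
      using assms unfolding bounded_difference_on_def by auto
    moreover have "real n = norm (?y [])" using defect by (simp add: restrT_def)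
    ultimately show ?thesis
      using norm_le_norm2[of ?y "[]"] finite_first_letters first_letters_subset_TT
      by (simp add: norm2_indicator card_first_letters)
  qed
  then show False using not_linear_le_sqrt by blast
qed

lemma no_equivariant_bounded_difference_Rop:
  assumes lin: "lin_on ell2 \<Lambda>" and eq: "equivariant_on ell2 \<Lambda>"
  shows "\<not> bounded_difference_on ell2 Rop \<Lambda> C"
proof
  assume bd: "bounded_difference_on ell2 Rop \<Lambda> C"
  define \<kappa> where "\<kappa> = \<Lambda> (indicator {[]}) [(0, True)]"
  have \<kappa>: "\<Lambda> (indicator {[]}) [a] = \<kappa>" for a
    unfolding \<kappa>_def using eq by (rule equivariant_Nil_indicator_letters) (simp add: indicator_in_ell2)
  define x where "x = (indicator {[(0, True)]} :: word \<Rightarrow> complex)"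
  let ?A = "range (\<lambda>j. [(0::nat, True), (j, True)])"
  have A_TT: "?A \<subseteq> TT" by (auto simp: TT_def reduced_Cons_Cons letter_inv_def)
  have "Rop x t - \<Lambda> x t = 1 - \<kappa>" if "t \<in> ?A" for t
    using that A_TT equivariant_indicator_letter[OF eq, of _ "(0, True)"]
    by (auto simp: x_def Rop_def indicator_in_ell2 letter_inv_def \<kappa>)
  moreover have "infinite ?A" by (rule range_inj_infinite) (simp add: inj_def)
  ultimately have "1 - \<kappa> = 0"
    using bd A_TT by (intro bounded_difference_constant_on_infinite[of ell2 Rop \<Lambda> C x ?A])
      (auto simp: x_def indicator_in_ell2)
  then have "norm (Rop (indicator (first_letters n)) [] - \<Lambda> (indicator (first_letters n)) []) = n" for n
    using equivariant_first_letters_at_Nil[OF lin eq indicator_in_ell2] by (simp add: Rop_def \<kappa>_def)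
  then show False
    using bounded_difference_at_Nil_not_linear[OF bd] finite_first_letters first_letters_subset_TT
    by (auto simp: indicator_in_ell2)
qed

lemma Lop_indicator_Nil: "Lop (indicator {[]}) = (\<lambda>s. 0)"
  by (auto simp: Lop_def fun_eq_iff intro!: infsum_0)

lemma Lop_first_letters_at_Nil: "Lop (indicator (first_letters n)) [] = of_nat n"
proof -
  have "(\<Sum>\<^sub>\<infinity>t\<in>{t\<in>TT. t \<noteq> [] \<and> butlast t = []}. indicator (first_letters n) t)
      = (\<Sum>\<^sub>\<infinity>t\<in>first_letters n. 1 :: complex)"
    by (rule infsum_cong_neutral) (auto simp: first_letters_def)
  then show ?thesis
    by (simp add: Lop_def finite_first_letters card_first_letters)
qed

lemma no_equivariant_bounded_difference_Lop:
  assumes lin: "lin_on ell1 \<Lambda>" and eq: "equivariant_on ell1 \<Lambda>"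
  shows "\<not> bounded_difference_on ell1 Lop \<Lambda> C"
proof
  assume bd: "bounded_difference_on ell1 Lop \<Lambda> C"
  define \<kappa> where "\<kappa> = \<Lambda> (indicator {[]}) [(0, True)]"
  have \<kappa>: "\<Lambda> (indicator {[]}) [a] = \<kappa>" for a
    unfolding \<kappa>_def using eq by (rule equivariant_Nil_indicator_letters) (simp add: indicator_in_ell1)
  let ?A = "range (\<lambda>j::nat. [(j, True)])"
  have "infinite ?A" by (rule range_inj_infinite) (simp add: inj_def)
  then have "- \<kappa> = 0"
    by (intro bounded_difference_constant_on_infinite[OF bd, of "indicator {[]}" ?A])
      (auto simp: indicator_in_ell1 Lop_indicator_Nil \<kappa>)
  then have "norm (Lop (indicator (first_letters n)) [] - \<Lambda> (indicator (first_letters n)) []) = n" for n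
    using equivariant_first_letters_at_Nil[OF lin eq indicator_in_ell1]
    by (simp add: Lop_first_letters_at_Nil \<kappa>_def)
  then show False
    using bounded_difference_at_Nil_not_linear[OF bd] finite_first_letters first_letters_subset_TT
    by (auto simp: indicator_in_ell1)
qed

theorem mainTheorem5:
  shows "(\<nexists>\<Lambda>. lin_on ell2 \<Lambda> \<and> equivariant_on ell2 \<Lambda> \<and>
            (\<exists>C::real. \<forall>x\<in>ell2. restrT (\<lambda>t. Rop x t - \<Lambda> x t) \<in> ell2 \<and>
                 norm2 (restrT (\<lambda>t. Rop x t - \<Lambda> x t)) \<le> C * norm2 x))
       \<and> (\<nexists>\<Lambda>. lin_on ell1 \<Lambda> \<and> equivariant_on ell1 \<Lambda> \<and>
            (\<exists>C::real. \<forall>x\<in>ell1. restrT (\<lambda>t. Lop x t - \<Lambda> x t) \<in> ell2 \<and>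
                 norm2 (restrT (\<lambda>t. Lop x t - \<Lambda> x t)) \<le> C * norm2 x))"
  using no_equivariant_bounded_difference_Rop no_equivariant_bounded_difference_Lop
  unfolding bounded_difference_on_def by blast

end
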